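(* Let $k\ge 2$ and let $G=(\{a,b\},\varphi,a)$ be a D0L-system with $\varphi$ $k$-uniform. Then $G$ is not circular if and only if one of the following holds: (i) $\varphi(a)=\varphi(b)$; (ii) $\varphi(a)=a^k$ or $\varphi(b)=b^k$; (iii) $\varphi(a)=b^k$ and $\varphi(b)=a^k$; (iv) $k=2m+1$ with $m\ge1$, $\varphi(a)=(ab)^ma$ and $\varphi(b)=(ba)^mb$; (v) $k=2m+1$ with $m\ge1$, $\varphi(a)=(ba)^mb$ and $\varphi(b)=(ab)^ma$.
   Context: A D0L-system $G=(\mathcal{A},\varphi,w)$ has language $L(G)=\{\varphi^n(w):n\in\mathbb{N}\}$; $S(L(G))$ is the set of factors of its words. For $u\in S(L(G))$, an interpretation of $u$ is a triple $(p,v,s)$ with $p,s\in\mathcal{A}^*$, $v\in S(L(G))$, $\varphi(v)=pus$. Writing $v=v_1\cdots v_n$, $v'=v'_1\cdots v'_m$, $u=u_1\cdots u_\ell$, interpretations $(p,v,s)$, $(p',v',s')$ are synchronized at position $j$ if there are $i,i'$ with $\varphi(v_1\cdots v_i)=pu_1\cdots u_j$ and $\varphi(v'_1\cdots v'_{i'})=p'u_1\cdots u_j$; $u$ has a synchronizing point at position $j$ if all its interpretations are pairwise synchronized at $j$. A PD0L-system (no letter maps to $\varepsilon$) that is injective on $S(L(G))$ (i.e. $\varphi(u)=\varphi(v)$ with $u,v\in S(L(G))$ implies $u=v$) is circular if there exists $Z$ such that every $u\in S(L(G))$ with $|u|>Z$ has a synchronizing point. A morphism on $\{a,b\}$ is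 $k$-uniform if $|\varphi(a)|=|\varphi(b)|=k$. *)

theory Defs
  imports Main
begin

datatype ab = A | B

definition morph :: "('s \<Rightarrow> 's list) \<Rightarrow> 's list \<Rightarrow> 's list" where
  "morph \<phi> u = concat (map \<phi> u)"

definition D0L_lang :: "('s \<Rightarrow> 's list) \<Rightarrow> 's list \<Rightarrow> 's list set" where
  "D0L_lang \<phi> w = {(morph \<phi> ^^ n) w | n. True}"

definition factors :: "('s \<Rightarrow> 's list) \<Rightarrow> 's list \<Rightarrow> 's list set" where
  "factors \<phi> w = {u. \<exists>x y z. z \<in> D0L_lang \<phi> w \<and> z = x @ u @ y}"

definition is_interp :: "('s \<Rightarrow> 's list) \<Rightarrow> 's list \<Rightarrow> 's list \<Rightarrow> 's list \<times> 's list \<times> 's list \<Rightarrow> bool" where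
  "is_interp \<phi> w u t = (case t of (p, v, s) \<Rightarrow> v \<in> factors \<phi> w \<and> morph \<phi> v = p @ u @ s)"

definition synchronized_at :: "('s \<Rightarrow> 's list) \<Rightarrow> 's list \<Rightarrow> nat \<Rightarrow> 's list \<times> 's list \<times> 's list \<Rightarrow> 's list \<times> 's list \<times> 's list \<Rightarrow> bool" where
  "synchronized_at \<phi> u j t t' = (case t of (p, v, s) \<Rightarrow> case t' of (p', v', s') \<Rightarrow>
     (\<exists>i i'. morph \<phi> (take i v) = p @ take j u \<and> morph \<phi> (take i' v') = p' @ take j u))"

definition has_sync_point :: "('s \<Rightarrow> 's list) \<Rightarrow> 's list \<Rightarrow> 's list \<Rightarrow> bool" where
  "has_sync_point \<phi> w u = (\<exists>j \<le> length u. \<forall>t t'. is_interp \<phi> w u t \<longrightarrow> is_interp \<phi> w u t'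
       \<longrightarrow> synchronized_at \<phi> u j t t')"

definition circular :: "('s \<Rightarrow> 's list) \<Rightarrow> 's list \<Rightarrow> bool" where
  "circular \<phi> w = ((\<forall>x. \<phi> x \<noteq> []) \<and>
     (\<forall>u \<in> factors \<phi> w. \<forall>v \<in> factors \<phi> w. morph \<phi> u = morph \<phi> v \<longrightarrow> u = v) \<and>
     (\<exists>Z::nat. \<forall>u \<in> factors \<phi> w. length u > Z \<longrightarrow> has_sync_point \<phi> w u))"

definition uniform :: "nat \<Rightarrow> (ab \<Rightarrow> ab list) \<Rightarrow> bool" where
  "uniform k \<phi> = (length (\<phi> A) = k \<and> length (\<phi> B) = k)"

end

theory Submission
  imports Defs
begin

text \<open>
  A \<open>k\<close>-uniform morphism cuts the image of a factor into blocks of length \<open>k\<close>, so an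
  interpretation \<open>(p, v, s)\<close> of \<open>u\<close> is determined up to whole blocks by the offset
  \<open>|p| mod k\<close>, and \<open>u\<close> has a synchronizing point as soon as all its interpretations have the
  same offset.

  Suppose two interpretations of a long factor have offsets differing by \<open>0 < d < k\<close>.  Then
  every block \<open>\<phi> (v ! i)\<close> of the first preimage is the suffix of length \<open>k - d\<close> of
  \<open>\<phi> (v' ! i)\<close> followed by the prefix of length \<open>d\<close> of \<open>\<phi> (v' ! (i + 1))\<close>, so the
  letters of \<open>v'\<close> form a walk in a graph on \<open>{A, B}\<close> (\<open>shift_edge\<close> below).  A
  combinatorics-on-words argument shows that, unless \<open>\<phi> A = \<phi> B\<close>, this graph misses the
  edge \<open>AB\<close>, the edge \<open>BA\<close> or both loops; hence \<open>v'\<close> contains a constant or an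
  alternating factor of half its length.  Long runs \<open>c\<^sup>n\<close> are factors only when some letter
  is mapped to \<open>c\<^sup>k\<close> and has long runs itself, which leads to cases (ii) and (iii); long
  alternating factors force \<open>\<phi> A\<close> and \<open>\<phi> B\<close> to be complementary alternating words, cases
  (iv) and (v).

  Conversely, in case (i) \<open>\<phi>\<close> is not injective on the letters, and in the other cases
  arbitrarily long runs or alternating words are images of factors in two ways, with offsets
  \<open>0\<close> and \<open>1\<close>.
\<close>

section \<open>Uniform morphisms\<close>

lemma morph_Nil [simp]: "morph \<phi> [] = []"
  by (simp add: morph_def)

lemma morph_Cons [simp]: "morph \<phi> (c # u) = \<phi> c @ morph \<phi> u"
  by (simp add: morph_def)

lemma morph_append [simp]: "morph \<phi> (u @ v) = morph \<phi> u @ morph \<phi> v"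
  by (simp add: morph_def)

lemma morph_replicate_power:
  "\<phi> c = replicate k d \<Longrightarrow> morph \<phi> (replicate n c) = replicate (k * n) d"
  by (induction n) (simp_all add: replicate_add)

lemma uniform_length: "uniform k \<phi> \<Longrightarrow> length (\<phi> c) = k"
  by (cases c) (auto simp: uniform_def)

lemma length_morph: "uniform k \<phi> \<Longrightarrow> length (morph \<phi> u) = k * length u"
  by (induction u) (auto simp: uniform_length)

lemma take_morph: "uniform k \<phi> \<Longrightarrow> morph \<phi> (take i v) = take (k * i) (morph \<phi> v)"
proof (induction v arbitrary: i)
  case (Cons c v)
  then show ?case by (cases i) (auto simp: uniform_length)
qed simp

lemma drop_morph: "uniform k \<phi> \<Longrightarrow> morph \<phi> (drop i v) = drop (k * i) (morph \<phi> v)"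
proof (induction v arbitrary: i)
  case (Cons c v)
  then show ?case by (cases i) (auto simp: uniform_length)
qed simp

lemma inj_if_images_differ:
  assumes "\<phi> A \<noteq> \<phi> B" shows "inj \<phi>"
proof (rule injI)
  fix x y assume "\<phi> x = \<phi> y"
  with assms show "x = y" by (cases x; cases y) auto
qed

lemma inj_morph:
  assumes un: "uniform k \<phi>" and k: "0 < k" and inj: "\<phi> A \<noteq> \<phi> B"
  shows "morph \<phi> u = morph \<phi> v \<Longrightarrow> u = v"
proof (induction u arbitrary: v)
  case Nil
  then show ?case using length_morph[OF un, of v] k by simp
next
  case (Cons a u)
  then have "k * length v = k * Suc (length u)"
    using length_morph[OF un, of v] length_morph[OF un, of "a # u"] by simp
  then have "length v = Suc (length u)" using k nat_mult_eq_cancel1 by blast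
  then obtain b v' where v: "v = b # v'" by (cases v) auto
  have "\<phi> a @ morph \<phi> u = \<phi> b @ morph \<phi> v'" using Cons.prems v by simp
  then have "\<phi> a = \<phi> b" "morph \<phi> u = morph \<phi> v'" using uniform_length[OF un] by auto
  then show ?case using Cons.IH inj_if_images_differ[OF inj] v by (simp add: inj_eq)
qed

section \<open>Factors and interpretations\<close>

lemma factorsI: "z \<in> D0L_lang \<phi> w \<Longrightarrow> z = x @ u @ y \<Longrightarrow> u \<in> factors \<phi> w"
  unfolding factors_def by blast

lemma factors_infix: "x @ u @ y \<in> factors \<phi> w \<Longrightarrow> u \<in> factors \<phi> w"
proof -
  assume "x @ u @ y \<in> factors \<phi> w"
  then obtain a b z where "z \<in> D0L_lang \<phi> w" "z = (a @ x) @ u @ (y @ b)"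
    unfolding factors_def by auto
  then show ?thesis by (rule factorsI)
qed

lemma factors_take: "u \<in> factors \<phi> w \<Longrightarrow> take n u \<in> factors \<phi> w"
  using factors_infix[of "[]" "take n u" "drop n u"] by simp

lemma factors_drop: "u \<in> factors \<phi> w \<Longrightarrow> drop n u \<in> factors \<phi> w"
  using factors_infix[of "take n u" "drop n u" "[]"] by simp

lemma axiom_in_factors: "w \<in> factors \<phi> w"
proof -
  have "(morph \<phi> ^^ 0) w \<in> D0L_lang \<phi> w" unfolding D0L_lang_def by blast
  then show ?thesis by (rule factorsI[where x="[]" and y="[]"]) simp
qed

lemma factors_morph: "u \<in> factors \<phi> w \<Longrightarrow> morph \<phi> u \<in> factors \<phi> w"
proof -
  assume "u \<in> factors \<phi> w"
  then obtain x y n where "(morph \<phi> ^^ n) w = x @ u @ y"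
    unfolding factors_def D0L_lang_def by blast
  then have "(morph \<phi> ^^ Suc n) w = morph \<phi> x @ morph \<phi> u @ morph \<phi> y" by simp
  moreover have "(morph \<phi> ^^ Suc n) w \<in> D0L_lang \<phi> w" unfolding D0L_lang_def by blast
  ultimately show ?thesis by (intro factorsI) auto
qed

lemma factors_desubstitute:
  assumes "u \<in> factors \<phi> w" and "length w < length u"
  shows "\<exists>v p s. v \<in> factors \<phi> w \<and> morph \<phi> v = p @ u @ s"
proof -
  obtain x y n where e: "(morph \<phi> ^^ n) w = x @ u @ y"
    using assms(1) unfolding factors_def D0L_lang_def by blast
  then obtain m where "n = Suc m" using assms(2) by (cases n) auto
  then have "morph \<phi> ((morph \<phi> ^^ m) w) = x @ u @ y" using e by simp
  moreover have "(morph \<phi> ^^ m) w \<in> factors \<phi> w"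
    by (rule factorsI[of _ _ _ "[]" _ "[]"]) (auto simp: D0L_lang_def)
  ultimately show ?thesis by blast
qed

lemma interp_reduce_prefix:
  assumes un: "uniform k \<phi>" and v: "v \<in> factors \<phi> w" and e: "morph \<phi> v = p @ u @ s"
  shows "\<exists>p' v'. v' \<in> factors \<phi> w \<and> morph \<phi> v' = p' @ u @ s \<and> length p' = length p mod k"
proof -
  define i where "i = length p div k"
  have le: "k * i \<le> length p" unfolding i_def by simp
  have "morph \<phi> (drop i v) = drop (k * i) p @ u @ s" using drop_morph[OF un] e le by simp
  moreover have "length (drop (k * i) p) = length p mod k"
    unfolding i_def by (simp add: minus_mult_div_eq_mod)
  ultimately show ?thesis using factors_drop[OF v] by blast
qed

lemma block_of_interp:
  assumes un: "uniform k \<phi>" and k: "0 < k" and e: "morph \<phi> v = p @ u @ s"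
    and le: "length p \<le> k * i" "k * Suc i \<le> length p + length u"
  shows "i < length v \<and> \<phi> (v ! i) = take k (drop (k * i - length p) u)"
proof
  have "k * Suc i \<le> k * length v" using e le length_morph[OF un, of v] by simp
  then show i: "i < length v" using k nat_mult_le_cancel1 Suc_le_eq by blast
  have "drop i v = v ! i # drop (Suc i) v" using i by (rule Cons_nth_drop_Suc[symmetric])
  then have "morph \<phi> (drop i v) = \<phi> (v ! i) @ morph \<phi> (drop (Suc i) v)" by simp
  then have "\<phi> (v ! i) = take k (drop (k * i) (p @ u @ s))"
    using drop_morph[OF un, of i v] uniform_length[OF un] e by simp
  also have "\<dots> = take k (drop (k * i - length p) u)"
    using le by (simp add: take_append)
  finally show "\<phi> (v ! i) = take k (drop (k * i - length p) u)" .
qed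

lemma long_factor_blocks:
  assumes un: "uniform k \<phi>" and k: "2 \<le> k" and u: "u \<in> factors \<phi> [A]"
    and long: "k * (M + 2) \<le> length u"
  shows "\<exists>w b. w \<in> factors \<phi> [A] \<and> length w = M \<and> b \<le> k \<and>
           (\<forall>i < M. \<phi> (w ! i) = take k (drop (b + k * i) u))"
proof -
  have "2 * 1 \<le> k * (M + 2)" using k by (intro mult_le_mono) auto
  then have "length [A] < length u" using long by simp
  then obtain v0 p0 s where "v0 \<in> factors \<phi> [A]" "morph \<phi> v0 = p0 @ u @ s"
    using factors_desubstitute[OF u] by blast
  then obtain p v where v: "v \<in> factors \<phi> [A]" "morph \<phi> v = p @ u @ s" "length p = length p0 mod k"
    using interp_reduce_prefix[OF un] by blast
  have short: "length p < k" using v(3) k by simp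
  define w where "w = take M (drop 1 v)"
  have block: "Suc i < length v \<and> \<phi> (v ! Suc i) = take k (drop (k - length p + k * i) u)"
    if "i < M" for i
  proof -
    have "k * Suc (Suc i) \<le> k * (M + 2)" using that by simp
    then have "k * Suc (Suc i) \<le> length p + length u" using long by linarith
    moreover have "length p \<le> k * Suc i" using short by simp
    ultimately have "Suc i < length v \<and> \<phi> (v ! Suc i) = take k (drop (k * Suc i - length p) u)"
      using block_of_interp[OF un _ v(2)] k by simp
    moreover have "k * Suc i - length p = k - length p + k * i" using short by simp
    ultimately show ?thesis by simp
  qed
  have len: "length w = M"
  proof (cases M)
    case (Suc M')
    then show ?thesis using block[of M'] unfolding w_def by (auto simp: min_def)
  qed (simp add: w_def)
  have "\<phi> (w ! i) = take k (drop (k - length p + k * i) u)" if "i < M" for i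
    using block[OF that] len that unfolding w_def by simp
  moreover have "w \<in> factors \<phi> [A]"
    unfolding w_def by (intro factors_take factors_drop v(1))
  ultimately show ?thesis using len by (intro exI[of _ w] exI[of _ "k - length p"]) auto
qed

section \<open>Long constant and alternating factors\<close>

definition exceptional :: "nat \<Rightarrow> (ab \<Rightarrow> ab list) \<Rightarrow> bool" where
  "exceptional k \<phi> \<longleftrightarrow> \<phi> A = \<phi> B
     \<or> (\<phi> A = replicate k A \<or> \<phi> B = replicate k B)
     \<or> (\<phi> A = replicate k B \<and> \<phi> B = replicate k A)
     \<or> (\<exists>m\<ge>1. k = 2*m+1 \<and> \<phi> A = concat (replicate m [A,B]) @ [A]
                          \<and> \<phi> B = concat (replicate m [B,A]) @ [B])
     \<or> (\<exists>m\<ge>1. k = 2*m+1 \<and> \<phi> A = concat (replicate m [B,A]) @ [B]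
                          \<and> \<phi> B = concat (replicate m [A,B]) @ [A])"

lemma replicate_factor_short_if_no_power:
  assumes un: "uniform k \<phi>" and k: "2 \<le> k" and no_power: "\<forall>e. \<phi> e \<noteq> replicate k c"
    and F: "replicate n c \<in> factors \<phi> [A]"
  shows "n < 3 * k"
proof (rule ccontr)
  assume long: "\<not> n < 3 * k"
  then obtain w b where "b \<le> k" "\<forall>i < 1. \<phi> (w ! i) = take k (drop (b + k * i) (replicate n c))"
    using long_factor_blocks[OF un k F, of 1] by auto
  then have "\<phi> (w ! 0) = take k (drop b (replicate n c))" by simp
  also have "\<dots> = replicate k c" using \<open>b \<le> k\<close> long by (simp add: min_def)
  finally show False using no_power by blast
qed

lemma replicate_factor_short_if_power:
  assumes un: "uniform k \<phi>" and k: "2 \<le> k" and inj: "\<phi> A \<noteq> \<phi> B"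
    and power: "\<phi> e = replicate k c" and no_run: "replicate R e \<notin> factors \<phi> [A]"
    and F: "replicate n c \<in> factors \<phi> [A]"
  shows "n < k * (R + 2)"
proof (rule ccontr)
  assume long: "\<not> n < k * (R + 2)"
  then obtain w b where w: "w \<in> factors \<phi> [A]" "length w = R" "b \<le> k"
      "\<forall>i < R. \<phi> (w ! i) = take k (drop (b + k * i) (replicate n c))"
    using long_factor_blocks[OF un k F, of R] by auto
  have "w ! i = e" if "i < R" for i
  proof -
    have "k * Suc i \<le> k * R" using that by (intro mult_le_mono2) simp
    moreover have "k * (R + 2) = k * R + 2 * k" "k * Suc i = k * i + k" by (simp_all add: algebra_simps)
    ultimately have "b + k * i + k \<le> n" using w(3) long by linarith
    then have "\<phi> (w ! i) = \<phi> e" using w(4) that power by (simp add: min_def)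
    then show ?thesis using injD[OF inj_if_images_differ[OF inj]] by blast
  qed
  then have "w = replicate R e" using w(2) by (intro replicate_eqI) (auto simp: in_set_conv_nth)
  then show False using w(1) no_run by simp
qed

lemma replicate_factor_short:
  assumes un: "uniform k \<phi>" and k: "2 \<le> k" and ne: "\<not> exceptional k \<phi>"
    and F: "replicate n c \<in> factors \<phi> [A]"
  shows "n < k * (3 * k + 2)"
proof (cases "\<exists>e. \<phi> e = replicate k c")
  case False
  then have "n < 3 * k" using replicate_factor_short_if_no_power[OF un k _ F] by blast
  moreover have "3 * k \<le> k * (3 * k + 2)"
    using mult_le_mono2[of 3 "3 * k + 2" k] k by (simp add: mult.commute)
  ultimately show ?thesis by linarith
next
  case True
  then obtain e where e: "\<phi> e = replicate k c" by blast
  have ne': "\<phi> A \<noteq> \<phi> B" "\<phi> A \<noteq> replicate k A" "\<phi> B \<noteq> replicate k B"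
    "\<not> (\<phi> A = replicate k B \<and> \<phi> B = replicate k A)"
    using ne unfolding exceptional_def by blast+
  have "replicate k A \<noteq> replicate k B" using k by (cases k) auto
  then have "\<phi> e' \<noteq> replicate k e" for e'
    using ne' e by (cases e; cases c; cases e') auto
  then have "replicate (3 * k) e \<notin> factors \<phi> [A]"
    using replicate_factor_short_if_no_power[OF un k, of e "3 * k"] by auto
  then show ?thesis using replicate_factor_short_if_power[OF un k ne'(1) e _ F] by blast
qed

fun flip :: "ab \<Rightarrow> ab" where
  "flip A = B"
| "flip B = A"

lemma flip_flip [simp]: "flip (flip c) = c"
  by (cases c) auto

lemma flip_neq [simp]: "flip c \<noteq> c" "c \<noteq> flip c"
  by (cases c; simp)+

lemma neq_flip: "a \<noteq> b \<Longrightarrow> b = flip a"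
  by (cases a; cases b) auto

fun alt_word :: "ab \<Rightarrow> nat \<Rightarrow> ab list" where
  "alt_word c 0 = []"
| "alt_word c (Suc n) = c # alt_word (flip c) n"

lemma length_alt_word [simp]: "length (alt_word c n) = n"
  by (induction n arbitrary: c) auto

lemma take_alt_word [simp]: "take m (alt_word c n) = alt_word c (min m n)"
proof (induction n arbitrary: c m)
  case (Suc n)
  then show ?case by (cases m) auto
qed simp

lemma drop_alt_word [simp]:
  "drop m (alt_word c n) = alt_word (if even m then c else flip c) (n - m)"
proof (induction n arbitrary: c m)
  case (Suc n)
  then show ?case by (cases m) auto
qed simp

lemma alt_word_add:
  "alt_word c (m + n) = alt_word c m @ alt_word (if even m then c else flip c) n"
  by (induction m arbitrary: c) auto

lemma alt_word_odd: "alt_word c (2 * m + 1) = concat (replicate m [c, flip c]) @ [c]"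
proof (induction m)
  case (Suc m)
  have "alt_word c (2 * Suc m + 1) = c # flip c # alt_word c (2 * m + 1)" by simp
  then show ?case using Suc by simp
qed simp

lemma alt_word_images_exceptional:
  assumes k: "2 \<le> k" "odd k" and images: "\<phi> a = alt_word c k" "\<phi> (flip a) = alt_word (flip c) k"
  shows "exceptional k \<phi>"
proof -
  obtain m where m: "k = 2 * m + 1" using k(2) oddE by blast
  then have "1 \<le> m" using k(1) by simp
  then show ?thesis
    using images unfolding exceptional_def m alt_word_odd by (cases a; cases c) auto
qed

definition run_bound :: "nat \<Rightarrow> nat" where
  "run_bound k = k * (k * (3 * k + 2) + 2)"

lemma alt_word_factor_short:
  assumes un: "uniform k \<phi>" and k: "2 \<le> k" and ne: "\<not> exceptional k \<phi>"
    and F: "alt_word c n \<in> factors \<phi> [A]"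
  shows "n < run_bound k"
proof (rule ccontr)
  define R where "R = k * (3 * k + 2)"
  assume "\<not> n < run_bound k"
  then have long: "k * (R + 2) \<le> n" unfolding run_bound_def R_def by simp
  then obtain w b where w: "w \<in> factors \<phi> [A]" "length w = R" "b \<le> k"
      "\<forall>i < R. \<phi> (w ! i) = take k (drop (b + k * i) (alt_word c n))"
    using long_factor_blocks[OF un k F, of R] by auto
  have block: "\<phi> (w ! i) = alt_word (if even (b + k * i) then c else flip c) k" if "i < R" for i
  proof -
    have "k * Suc i \<le> k * R" using that by (intro mult_le_mono2) simp
    moreover have "k * (R + 2) = k * R + 2 * k" "k * Suc i = k * i + k" by (simp_all add: algebra_simps)
    ultimately have "b + k * i + k \<le> n" using w(3) long by linarith
    then have "min k (n - (b + k * i)) = k" by simp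
    then show ?thesis using w(4) that by simp
  qed
  have "1 * 2 \<le> k * (3 * k + 2)" using k by (intro mult_le_mono) auto
  then have R2: "2 \<le> R" unfolding R_def by simp
  have inj: "inj \<phi>" using ne inj_if_images_differ unfolding exceptional_def by blast
  show False
  proof (cases "even k")
    case True
    have "w ! i = w ! 0" if "i < R" for i
    proof -
      have "\<phi> (w ! i) = \<phi> (w ! 0)" using block[OF that] block[of 0] R2 True by simp
      then show ?thesis using injD[OF inj] by blast
    qed
    then have "w = replicate R (w ! 0)" using w(2) by (intro replicate_eqI) (auto simp: in_set_conv_nth)
    then have "R < k * (3 * k + 2)" using replicate_factor_short[OF un k ne] w(1) by metis
    then show False unfolding R_def by simp
  next
    case False
    define c' where "c' = (if even b then c else flip c)"
    have images: "\<phi> (w ! 0) = alt_word c' k" "\<phi> (w ! 1) = alt_word (flip c') k"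
      using block[of 0] block[of 1] R2 False unfolding c'_def by (cases "even b"; simp)+
    have "alt_word c' k \<noteq> alt_word (flip c') k" using k by (cases k) auto
    then have "w ! 1 = flip (w ! 0)" using images by (intro neq_flip) auto
    then have "exceptional k \<phi>"
      using alt_word_images_exceptional[of k \<phi> "w ! 0" c'] k False images by simp
    then show False using ne by simp
  qed
qed

lemma persistent_letter_split:
  "\<forall>j. Suc j < length w \<longrightarrow> w ! j = p \<longrightarrow> w ! Suc j = p \<Longrightarrow>
   \<exists>i j. w = replicate i (flip p) @ replicate j p"
proof (induction w)
  case Nil
  show ?case by (rule exI[of _ 0], rule exI[of _ 0]) simp
next
  case (Cons x w)
  have "\<forall>j. Suc j < length w \<longrightarrow> w ! j = p \<longrightarrow> w ! Suc j = p"
    using Cons.prems by auto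
  then obtain i j where w: "w = replicate i (flip p) @ replicate j p" using Cons.IH by blast
  show ?case
  proof (cases "x = p")
    case True
    have "i = 0"
    proof (rule ccontr)
      assume "i \<noteq> 0"
      then have "w ! 0 = flip p" "0 < length w" using w by (auto simp: nth_append)
      then show False using Cons.prems True by auto
    qed
    then have "x # w = replicate 0 (flip p) @ replicate (Suc j) p" using w True by simp
    then show ?thesis by blast
  next
    case False
    then have "x # w = replicate (Suc i) (flip p) @ replicate j p" using w neq_flip[of p x] by auto
    then show ?thesis by blast
  qed
qed

lemma alternating_eq_alt_word:
  "\<forall>j. Suc j < length w \<longrightarrow> w ! j \<noteq> w ! Suc j \<Longrightarrow> w = alt_word (hd w) (length w)"
proof (induction w)
  case (Cons x w)
  have "\<forall>j. Suc j < length w \<longrightarrow> w ! j \<noteq> w ! Suc j" using Cons.prems by auto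
  then have IH: "w = alt_word (hd w) (length w)" using Cons.IH by blast
  show ?case
  proof (cases "w = []")
    case False
    then have "hd w = flip x" using Cons.prems neq_flip by (auto simp: hd_conv_nth)
    then show ?thesis using IH by simp
  qed simp
qed simp

lemma split_two_runs:
  "\<exists>x y n c. replicate i a @ replicate j b = x @ replicate n c @ y \<and> i + j \<le> 2 * n"
proof (cases "j \<le> i")
  case True
  then show ?thesis by (intro exI[of _ "[]"] exI[of _ "replicate j b"] exI[of _ i] exI[of _ a]) auto
next
  case False
  then show ?thesis by (intro exI[of _ "replicate i a"] exI[of _ "[]"] exI[of _ j] exI[of _ b]) auto
qed

text \<open>A walk in a graph on \<open>{A, B}\<close> that lacks one of the edges \<open>AB\<close>, \<open>BA\<close> gets stuck
  at one letter, and one without loops alternates.\<close>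

lemma walk_contains_long_run:
  assumes walk: "\<forall>j. Suc j < length w \<longrightarrow> E (w ! j) (w ! Suc j)"
    and incomplete: "\<not> (E A B \<and> E B A \<and> (E A A \<or> E B B))"
  shows "\<exists>x y n c. length w \<le> 2 * n \<and> (w = x @ replicate n c @ y \<or> w = x @ alt_word c n @ y)"
proof -
  have runs: "\<exists>x y n c. length w \<le> 2 * n \<and> w = x @ replicate n c @ y"
    if no_edge: "\<not> E p (flip p)" for p
  proof -
    have "\<forall>j. Suc j < length w \<longrightarrow> w ! j = p \<longrightarrow> w ! Suc j = p"
    proof (intro allI impI)
      fix j assume "Suc j < length w" "w ! j = p"
      then have "E p (w ! Suc j)" using walk by auto
      then show "w ! Suc j = p" using no_edge neq_flip by metis
    qed
    then obtain i j where "w = replicate i (flip p) @ replicate j p"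
      using persistent_letter_split by blast
    then show ?thesis using split_two_runs[of i "flip p" j p] by auto
  qed
  consider "\<not> E A B" | "\<not> E B A" | "\<not> E A A" "\<not> E B B" using incomplete by blast
  then show ?thesis
  proof cases
    case 1
    then show ?thesis using runs[of A] by auto
  next
    case 2
    then show ?thesis using runs[of B] by auto
  next
    case 3
    have "\<forall>j. Suc j < length w \<longrightarrow> w ! j \<noteq> w ! Suc j"
    proof (intro allI impI notI)
      fix j assume "Suc j < length w" "w ! j = w ! Suc j"
      then have "E (w ! j) (w ! j)" using walk by metis
      then show False using 3 by (cases "w ! j") auto
    qed
    then have "w = [] @ alt_word (hd w) (length w) @ []" using alternating_eq_alt_word by simp
    moreover have "length w \<le> 2 * length w" by simp
    ultimately show ?thesis by blast
  qed
qed

section \<open>Exceptional morphisms are not circular\<close>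

lemma not_circularI:
  assumes un: "uniform k \<phi>" and k: "2 \<le> k"
    and shifted: "\<And>Z. \<exists>u c v v'. Z < length u \<and> v \<in> factors \<phi> w \<and> v' \<in> factors \<phi> w
                    \<and> take (length u) (morph \<phi> v) = u \<and> take (Suc (length u)) (morph \<phi> v') = c # u"
  shows "\<not> circular \<phi> w"
proof
  assume "circular \<phi> w"
  then obtain Z where Z: "\<forall>u \<in> factors \<phi> w. Z < length u \<longrightarrow> has_sync_point \<phi> w u"
    unfolding circular_def by blast
  obtain u c v v' where u: "Z < length u" and v: "v \<in> factors \<phi> w" "take (length u) (morph \<phi> v) = u"
    and v': "v' \<in> factors \<phi> w" "take (Suc (length u)) (morph \<phi> v') = c # u"
    using shifted by blast
  define s where "s = drop (length u) (morph \<phi> v)"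
  define s' where "s' = drop (Suc (length u)) (morph \<phi> v')"
  have e: "morph \<phi> v = u @ s" "morph \<phi> v' = c # u @ s'"
    unfolding s_def s'_def by (metis append_take_drop_id v(2) v'(2) append_Cons)+
  have "u \<in> factors \<phi> w" using factors_morph[OF v(1)] e(1) factors_infix[of "[]" u s] by simp
  then obtain j where j: "j \<le> length u" and
    sync: "\<forall>t t'. is_interp \<phi> w u t \<longrightarrow> is_interp \<phi> w u t' \<longrightarrow> synchronized_at \<phi> u j t t'"
    using Z u unfolding has_sync_point_def by blast
  have "is_interp \<phi> w u ([], v, s)" "is_interp \<phi> w u ([c], v', s')"
    using v(1) v'(1) e by (simp_all add: is_interp_def)
  then have "synchronized_at \<phi> u j ([], v, s) ([c], v', s')" using sync by blast
  then obtain i i' where "morph \<phi> (take i v) = take j u" "morph \<phi> (take i' v') = c # take j u"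
    unfolding synchronized_at_def by auto
  then have "k * length (take i v) = j" "k * length (take i' v') = Suc j"
    using length_morph[OF un, of "take i v"] length_morph[OF un, of "take i' v'"] j by simp_all
  then have "k dvd Suc j - j" by (metis dvd_diff_nat dvd_triv_left)
  then show False using k by simp
qed

lemma scaling_induct:
  fixes k n :: nat
  assumes k: "2 \<le> k" and base: "P 1" and step: "\<And>n. P n \<Longrightarrow> P (k * n)"
    and down: "\<And>m n. m \<le> n \<Longrightarrow> P n \<Longrightarrow> P m"
  shows "P n"
proof -
  have "P (k ^ i)" for i
  proof (induction i)
    case 0
    show ?case using base by (simp only: power_0)
  next
    case (Suc i)
    then show ?case using step by simp
  qed
  moreover have "n \<le> k ^ n"
  proof -
    have "n < 2 ^ n" by (rule less_exp)
    also have "2 ^ n \<le> k ^ n" using k by (intro power_mono) simp_all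
    finally show ?thesis by simp
  qed
  ultimately show ?thesis using down by blast
qed

lemma replicate_in_factors:
  assumes k: "2 \<le> k" and images: "\<phi> c = replicate k c'" "\<phi> c' = replicate k c"
    and letters: "[c] \<in> factors \<phi> w" "[c'] \<in> factors \<phi> w"
  shows "replicate n c \<in> factors \<phi> w"
proof -
  have "replicate n c \<in> factors \<phi> w \<and> replicate n c' \<in> factors \<phi> w"
  proof (rule scaling_induct[OF k, where P="\<lambda>n. replicate n c \<in> factors \<phi> w \<and> replicate n c' \<in> factors \<phi> w"])
    show "replicate 1 c \<in> factors \<phi> w \<and> replicate 1 c' \<in> factors \<phi> w" using letters by simp
  next
    fix n assume "replicate n c \<in> factors \<phi> w \<and> replicate n c' \<in> factors \<phi> w"
    then show "replicate (k * n) c \<in> factors \<phi> w \<and> replicate (k * n) c' \<in> factors \<phi> w"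
      using factors_morph morph_replicate_power[of \<phi> c k c', OF images(1)]
        morph_replicate_power[of \<phi> c' k c, OF images(2)] by metis
  next
    fix m n assume "m \<le> n" "replicate n c \<in> factors \<phi> w \<and> replicate n c' \<in> factors \<phi> w"
    then show "replicate m c \<in> factors \<phi> w \<and> replicate m c' \<in> factors \<phi> w"
      using factors_take[of "replicate n _" \<phi> w m] by (simp add: min_def)
  qed
  then show ?thesis ..
qed

lemma not_circular_if_runs:
  assumes un: "uniform k \<phi>" and k: "2 \<le> k" and power: "\<phi> c' = replicate k c"
    and runs: "\<And>n. replicate n c' \<in> factors \<phi> w"
  shows "\<not> circular \<phi> w"
proof (rule not_circularI[OF un k])
  fix Z
  define v where "v = replicate (Z + 2) c'"
  have img: "morph \<phi> v = replicate (k * (Z + 2)) c"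
    unfolding v_def by (rule morph_replicate_power[of \<phi> c' k c, OF power])
  have "1 * (Z + 2) \<le> k * (Z + 2)" using k by (intro mult_le_mono1) simp
  then show "\<exists>u c v v'. Z < length u \<and> v \<in> factors \<phi> w \<and> v' \<in> factors \<phi> w
      \<and> take (length u) (morph \<phi> v) = u \<and> take (Suc (length u)) (morph \<phi> v') = c # u"
    using img runs[of "Z + 2"] unfolding v_def[symmetric]
    by (intro exI[of _ "replicate (Z + 1) c"] exI[of _ c] exI[of _ v]) (simp add: min_def)
qed

lemma morph_alt_word:
  assumes "odd k" and images: "\<And>c. \<phi> c = alt_word (g c) k" and g: "\<And>c. g (flip c) = flip (g c)"
  shows "morph \<phi> (alt_word c n) = alt_word (g c) (k * n)"
proof (induction n arbitrary: c)
  case (Suc n)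
  have "morph \<phi> (alt_word c (Suc n)) = alt_word (g c) k @ alt_word (flip (g c)) (k * n)"
    using Suc.IH[of "flip c"] images[of c] g[of c] by simp
  also have "\<dots> = alt_word (g c) (k + k * n)" using \<open>odd k\<close> by (simp add: alt_word_add)
  finally show ?case by simp
qed simp

lemma alt_word_in_factors:
  assumes k: "2 \<le> k" "odd k" and images: "\<And>c. \<phi> c = alt_word (g c) k"
    and g: "\<And>c. g (flip c) = flip (g c)" "\<And>c. g (g c) = c"
    and letters: "\<And>c. [c] \<in> factors \<phi> w"
  shows "alt_word c n \<in> factors \<phi> w"
proof -
  have "\<forall>c. alt_word c n \<in> factors \<phi> w"
  proof (rule scaling_induct[OF k(1), where P="\<lambda>n. \<forall>c. alt_word c n \<in> factors \<phi> w"])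
    show "\<forall>c. alt_word c 1 \<in> factors \<phi> w" using letters by (simp add: One_nat_def)
  next
    fix n assume "\<forall>c. alt_word c n \<in> factors \<phi> w"
    then show "\<forall>c. alt_word c (k * n) \<in> factors \<phi> w"
      using factors_morph morph_alt_word[of k \<phi> g, OF k(2) images g(1)] g(2) by metis
  next
    fix m n assume "m \<le> n" "\<forall>c. alt_word c n \<in> factors \<phi> w"
    then show "\<forall>c. alt_word c m \<in> factors \<phi> w"
      using factors_take[of "alt_word _ n" \<phi> w m] by (simp add: min_def)
  qed
  then show ?thesis ..
qed

lemma not_circular_if_alternating:
  assumes un: "uniform k \<phi>" and k: "2 \<le> k" "odd k"
    and images: "\<phi> A = alt_word a k" "\<phi> B = alt_word (flip a) k"
    and letters: "\<And>c. [c] \<in> factors \<phi> w"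
  shows "\<not> circular \<phi> w"
proof (rule not_circularI[OF un k(1)])
  fix Z
  define g where "g c = (if a = A then c else flip c)" for c
  have g: "\<phi> c = alt_word (g c) k" "g (flip c) = flip (g c)" "g (g c) = c" for c
    using images unfolding g_def by (cases a; cases c; simp)+
  define v where "v c = alt_word (g c) (Z + 2)" for c
  have img: "morph \<phi> (v c) = alt_word c (k * (Z + 2))" for c
    using morph_alt_word[of k \<phi> g, OF k(2) g(1,2), of "g c" "Z + 2"] unfolding v_def
    by (simp only: g(3))
  have vF: "v c \<in> factors \<phi> w" for c
    unfolding v_def by (rule alt_word_in_factors[OF k g letters])
  have "1 * (Z + 2) \<le> k * (Z + 2)" using k by (intro mult_le_mono1) simp
  then show "\<exists>u c v v'. Z < length u \<and> v \<in> factors \<phi> w \<and> v' \<in> factors \<phi> w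
      \<and> take (length u) (morph \<phi> v) = u \<and> take (Suc (length u)) (morph \<phi> v') = c # u"
    using img vF
    by (intro exI[of _ "alt_word A (Z + 1)"] exI[of _ B] exI[of _ "v A"] exI[of _ "v B"])
      (simp add: min_def)
qed

lemma alt_word_odd_images:
  assumes "k = 2 * m + 1" and "\<phi> A = concat (replicate m [a, flip a]) @ [a]"
    and "\<phi> B = concat (replicate m [flip a, a]) @ [flip a]"
  shows "\<phi> A = alt_word a k" "\<phi> B = alt_word (flip a) k"
  using assms by (simp_all only: alt_word_odd flip_flip)

lemma B_in_factors:
  assumes un: "uniform k \<phi>" and ne: "\<phi> A \<noteq> replicate k A"
  shows "[B] \<in> factors \<phi> [A]"
proof -
  have "B \<in> set (\<phi> A)"
  proof (rule ccontr)
    assume "B \<notin> set (\<phi> A)"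
    then have "\<phi> A = replicate k A"
      using uniform_length[OF un] by (intro replicate_eqI) (auto intro: ab.exhaust)
    then show False using ne by simp
  qed
  then obtain x y where "\<phi> A = x @ [B] @ y" by (metis split_list append_Cons append_Nil)
  moreover have "\<phi> A \<in> factors \<phi> [A]" using factors_morph[OF axiom_in_factors, of \<phi> "[A]"] by simp
  ultimately show ?thesis using factors_infix by metis
qed

lemma not_circular_if_same_images:
  assumes "\<phi> A = \<phi> B" and "[A] \<in> factors \<phi> w" "[B] \<in> factors \<phi> w"
  shows "\<not> circular \<phi> w"
proof
  assume "circular \<phi> w"
  then have "morph \<phi> [A] = morph \<phi> [B] \<longrightarrow> [A] = [B]" using assms(2,3) unfolding circular_def by blast
  then show False using assms(1) by simp
qed

lemma not_circular_if_exceptional: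
  assumes un: "uniform k \<phi>" and k: "2 \<le> k" and ex: "exceptional k \<phi>"
  shows "\<not> circular \<phi> [A]"
proof (cases "\<phi> A = replicate k A")
  case True
  then show ?thesis
    using not_circular_if_runs[OF un k True] replicate_in_factors[of k \<phi> A A, OF k True True] axiom_in_factors
    by blast
next
  case False
  have letters: "[c] \<in> factors \<phi> [A]" for c
    using B_in_factors[OF un False] axiom_in_factors by (cases c) auto
  from ex False consider (same) "\<phi> A = \<phi> B" | (power) "\<phi> B = replicate k B"
    | (swap) "\<phi> A = replicate k B" "\<phi> B = replicate k A"
    | (alt) a m where "k = 2 * m + 1" "\<phi> A = concat (replicate m [a, flip a]) @ [a]"
        "\<phi> B = concat (replicate m [flip a, a]) @ [flip a]"
    unfolding exceptional_def by (metis flip.simps)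
  then show ?thesis
  proof cases
    case same
    then show ?thesis using not_circular_if_same_images letters by blast
  next
    case power
    then show ?thesis using not_circular_if_runs[OF un k power] replicate_in_factors[of k \<phi> B B, OF k power power]
      letters by blast
  next
    case swap
    then show ?thesis using not_circular_if_runs[OF un k swap(2)] replicate_in_factors[of k \<phi> B A, OF k swap(2,1)]
      letters by blast
  next
    case alt
    then have "odd k" by simp
    then show ?thesis
      using not_circular_if_alternating[OF un k _ alt_word_odd_images[OF alt] letters] by blast
  qed
qed

section \<open>Interpretations with different offsets\<close>

lemma concat_replicate_concat_replicate:
  "concat (replicate a (concat (replicate m z))) = concat (replicate (a * m) z)"
  by (induction a) (auto simp: replicate_add)

lemma commuting_words_powers_eq:
  assumes "u @ v = v @ u"
  shows "concat (replicate (length v) u) = concat (replicate (length u) v)"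
proof -
  obtain m n z where u: "concat (replicate m z) = u" and v: "concat (replicate n z) = v"
    using comm_append_are_replicate[OF assms] by blast
  have lu: "length u = m * length z" and lv: "length v = n * length z"
    using u[symmetric] v[symmetric] by (simp_all add: length_concat sum_list_replicate)
  have "concat (replicate (length v) u) = concat (replicate (length v * m) z)"
    using u concat_replicate_concat_replicate by metis
  also have "\<dots> = concat (replicate (length u * n) z)" using lu lv by (simp add: ac_simps)
  also have "\<dots> = concat (replicate (length u) v)" using v concat_replicate_concat_replicate by metis
  finally show ?thesis .
qed

lemma commuting_same_length_eq:
  assumes z: "z \<noteq> []" and a: "a @ z = z @ a" and b: "b @ z = z @ b" and l: "length a = length b"
  shows "a = b"
proof -
  have "concat (replicate (length z) a) = concat (replicate (length z) b)"
    using commuting_words_powers_eq[OF a] commuting_words_powers_eq[OF b] l by simp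
  moreover obtain n where "length z = Suc n" using z by (cases "length z") auto
  ultimately have "a @ concat (replicate n a) = b @ concat (replicate n b)" by simp
  then show ?thesis using l by (simp add: append_eq_append_conv)
qed

lemma shift_closed_words_eq_aux:
  assumes l1: "length x1 = length y1" and l2: "length x2 = length y2"
    and n1: "x1 \<noteq> []" and n2: "x2 \<noteq> []"
    and H1: "x2 @ y1 = x1 @ x2" and H2: "y2 @ x1 = y1 @ y2"
    and L: "x2 @ x1 \<in> {x1 @ x2, y1 @ y2} \<or> y2 @ y1 \<in> {x1 @ x2, y1 @ y2}"
  shows "x1 @ x2 = y1 @ y2"
proof (rule ccontr)
  assume ne: "x1 @ x2 \<noteq> y1 @ y2"
  have x1_neq_y1: "x1 \<noteq> y1"
  proof
    assume e: "x1 = y1"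
    have "x2 @ x1 = x1 @ x2" using H1 e by simp
    moreover have "y2 @ x1 = x1 @ y2" using H2 e by simp
    ultimately have "x2 = y2" using commuting_same_length_eq[OF n1] l2 by blast
    then show False using ne e by simp
  qed
  have x2_neq_y2: "x2 \<noteq> y2" if E1: "x2 @ x1 = y1 @ x2"
  proof
    assume e: "x2 = y2"
    have "x1 @ (x2 @ x2) = (x2 @ x2) @ x1"
    proof -
      have "x1 @ (x2 @ x2) = (x1 @ x2) @ x2" by simp
      also have "\<dots> = x2 @ (y1 @ x2)" using H1 by simp
      also have "\<dots> = (x2 @ x2) @ x1" using E1 by simp
      finally show ?thesis .
    qed
    moreover have "y1 @ (x2 @ x2) = (x2 @ x2) @ y1"
    proof -
      have "y1 @ (x2 @ x2) = (y1 @ x2) @ x2" by simp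
      also have "\<dots> = x2 @ (x1 @ x2)" using E1 by simp
      also have "\<dots> = (x2 @ x2) @ y1" using H1 by simp
      finally show ?thesis .
    qed
    moreover have "x2 @ x2 \<noteq> []" using n2 by simp
    ultimately have "x1 = y1" using commuting_same_length_eq l1 by blast
    then show False using x1_neq_y1 by simp
  qed
  from L consider "x2 @ x1 = x1 @ x2" | "x2 @ x1 = y1 @ y2" | "y2 @ y1 = x1 @ x2" | "y2 @ y1 = y1 @ y2"
    by blast
  then show False
  proof cases
    case 1
    then have "x2 @ x1 = x2 @ y1" using H1 by simp
    then show False using x1_neq_y1 by simp
  next
    case 2
    then have "x2 @ x1 = y2 @ x1" using H2 by simp
    then have "x2 = y2" by simp
    then show False using x2_neq_y2 2 by simp
  next
    case 3
    then have "y2 @ y1 = x2 @ y1" using H1 by simp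
    then have e: "x2 = y2" by simp
    then have "x2 @ x1 = y1 @ x2" using H2 by simp
    then show False using x2_neq_y2 e by simp
  next
    case 4
    then have "y2 @ y1 = y2 @ x1" using H2 by simp
    then show False using x1_neq_y1 by simp
  qed
qed

lemma shift_closed_words_eq:
  assumes l1: "length x1 = length y1" and l2: "length x2 = length y2"
    and n1: "x1 \<noteq> []" and n2: "x2 \<noteq> []"
    and AB: "x2 @ y1 \<in> {x1 @ x2, y1 @ y2}" and BA: "y2 @ x1 \<in> {x1 @ x2, y1 @ y2}"
    and L: "x2 @ x1 \<in> {x1 @ x2, y1 @ y2} \<or> y2 @ y1 \<in> {x1 @ x2, y1 @ y2}"
  shows "x1 @ x2 = y1 @ y2"
proof (rule ccontr)
  assume ne: "x1 @ x2 \<noteq> y1 @ y2"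
  have "x2 @ y1 \<noteq> y2 @ x1"
  proof
    assume "x2 @ y1 = y2 @ x1"
    then have "x2 = y2 \<and> y1 = x1" using l2 by (simp add: append_eq_append_conv)
    then show False using ne by simp
  qed
  then consider "x2 @ y1 = x1 @ x2" "y2 @ x1 = y1 @ y2" | "x2 @ y1 = y1 @ y2" "y2 @ x1 = x1 @ x2"
    using AB BA by auto
  then show False
  proof cases
    case 1
    then show False using shift_closed_words_eq_aux[OF l1 l2 n1 n2 _ _ L] ne by blast
  next
    case 2
    \<comment> \<open>the mirror image of the first case\<close>
    have "rev x2 @ rev x1 = rev y2 @ rev y1"
    proof (rule shift_closed_words_eq_aux)
      show "rev x1 @ rev y2 = rev x2 @ rev x1" "rev y1 @ rev x2 = rev y2 @ rev y1"
        using 2 by (metis rev_append)+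
      show "rev x1 @ rev x2 \<in> {rev x2 @ rev x1, rev y2 @ rev y1}
          \<or> rev y1 @ rev y2 \<in> {rev x2 @ rev x1, rev y2 @ rev y1}"
        using L by (auto simp flip: rev_append)
    qed (use l1 l2 n1 n2 in simp_all)
    then show False using ne by (simp flip: rev_append)
  qed
qed

text \<open>Two interpretations whose prefixes differ by \<open>d\<close> letters force consecutive letters
  \<open>c c'\<close> of one preimage to satisfy this relation.\<close>

definition shift_edge :: "(ab \<Rightarrow> ab list) \<Rightarrow> nat \<Rightarrow> ab \<Rightarrow> ab \<Rightarrow> bool" where
  "shift_edge \<phi> d c c' \<longleftrightarrow> drop d (\<phi> c) @ take d (\<phi> c') \<in> {\<phi> A, \<phi> B}"

lemma shift_edges_incomplete:
  assumes un: "uniform k \<phi>" and inj: "\<phi> A \<noteq> \<phi> B" and d: "0 < d" "d < k"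
  shows "\<not> (shift_edge \<phi> d A B \<and> shift_edge \<phi> d B A \<and> (shift_edge \<phi> d A A \<or> shift_edge \<phi> d B B))"
proof
  assume "shift_edge \<phi> d A B \<and> shift_edge \<phi> d B A \<and> (shift_edge \<phi> d A A \<or> shift_edge \<phi> d B B)"
  then have AB: "drop d (\<phi> A) @ take d (\<phi> B) \<in> {\<phi> A, \<phi> B}"
    and BA: "drop d (\<phi> B) @ take d (\<phi> A) \<in> {\<phi> A, \<phi> B}"
    and loop: "drop d (\<phi> A) @ take d (\<phi> A) \<in> {\<phi> A, \<phi> B} \<or> drop d (\<phi> B) @ take d (\<phi> B) \<in> {\<phi> A, \<phi> B}"
    unfolding shift_edge_def by blast+
  have len: "length (\<phi> A) = k" "length (\<phi> B) = k" using uniform_length[OF un] by auto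
  have "take d (\<phi> A) @ drop d (\<phi> A) = take d (\<phi> B) @ drop d (\<phi> B)"
  proof (rule shift_closed_words_eq)
    show "length (take d (\<phi> A)) = length (take d (\<phi> B))"
      "length (drop d (\<phi> A)) = length (drop d (\<phi> B))" using len by simp_all
    show "take d (\<phi> A) \<noteq> []" "drop d (\<phi> A) \<noteq> []" using len d by auto
  qed (use AB BA loop in simp_all)
  then show False using inj by simp
qed

lemma take_drop_shift:
  "d \<le> k \<Longrightarrow> drop d (take k (drop a u)) @ take d (take k (drop (a + k) u)) = take k (drop (a + d) u)"
proof -
  assume d: "d \<le> k"
  have "take k (drop (a + d) u) = take (k - d) (drop (a + d) u) @ take d (drop (k - d) (drop (a + d) u))"
    using take_add[of "k - d" d "drop (a + d) u"] d by simp
  also have "drop (k - d) (drop (a + d) u) = drop (a + k) u" using d by (simp add: add.commute)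
  finally show ?thesis using d by (simp add: drop_take min_def add.commute)
qed

lemma interps_shift_walk:
  assumes un: "uniform k \<phi>" and k: "0 < k"
    and v: "v \<in> factors \<phi> [A]" "morph \<phi> v = p @ u @ s"
    and v': "v' \<in> factors \<phi> [A]" "morph \<phi> v' = p' @ u @ s'"
    and lt: "length p < length p'" and short: "length p' < k"
    and long: "k * (N + 2) \<le> length u"
  shows "\<exists>w \<in> factors \<phi> [A]. length w = N + 1 \<and>
           (\<forall>j. Suc j < length w \<longrightarrow> shift_edge \<phi> (length p' - length p) (w ! j) (w ! Suc j))"
proof -
  define d where "d = length p' - length p"
  have block: "i < length x \<and> \<phi> (x ! i) = take k (drop (k * i - length q) u)"
    if x: "morph \<phi> x = q @ u @ t" and q: "length q < k" and i: "1 \<le> i" "i \<le> N + 1" for x q t i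
  proof -
    have "k \<le> k * i" using mult_le_mono2[OF i(1), of k] by simp
    then have "length q \<le> k * i" using q by linarith
    moreover have "k * Suc i \<le> k * (N + 2)" using i(2) by (intro mult_le_mono2) simp
    then have "k * Suc i \<le> length q + length u" using long by linarith
    ultimately show ?thesis by (rule block_of_interp[OF un k x])
  qed
  define w where "w = take (N + 1) (drop 1 v')"
  have "N + 1 < length v'" using block[OF v'(2) short, of "N + 1"] by simp
  then have len: "length w = N + 1" unfolding w_def by simp
  have "shift_edge \<phi> d (w ! j) (w ! Suc j)" if j: "Suc j < length w" for j
  proof -
    define i where "i = Suc j"
    have i: "1 \<le> i" "i \<le> N" using j len unfolding i_def by auto
    define a where "a = k * i - length p'"
    have ki: "k \<le> k * i" using mult_le_mono2[OF i(1), of k] by simp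
    have "k * i - length p = a + d"
      using ki lt short unfolding a_def d_def by arith
    moreover have "k * Suc i = k * i + k" by simp
    then have "k * Suc i - length p' = a + k"
      using ki short unfolding a_def by arith
    ultimately have "\<phi> (v ! i) = take k (drop (a + d) u)"
      "\<phi> (v' ! i) = take k (drop a u)" "\<phi> (v' ! Suc i) = take k (drop (a + k) u)"
      using block[OF v(2) _ i(1)] block[OF v'(2) short i(1)] block[OF v'(2) short, of "Suc i"]
        lt short i(2) unfolding a_def by simp_all
    moreover have "d \<le> k" unfolding d_def using short by simp
    ultimately have "drop d (\<phi> (v' ! i)) @ take d (\<phi> (v' ! Suc i)) = \<phi> (v ! i)"
      using take_drop_shift[of d k a u] by simp
    moreover have "\<phi> (v ! i) \<in> {\<phi> A, \<phi> B}" by (cases "v ! i") auto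
    moreover have "w ! j = v' ! i" "w ! Suc j = v' ! Suc i"
      using j len \<open>N + 1 < length v'\<close> unfolding w_def i_def by auto
    ultimately show ?thesis unfolding shift_edge_def by simp
  qed
  moreover have "w \<in> factors \<phi> [A]" unfolding w_def by (intro factors_take factors_drop v'(1))
  ultimately show ?thesis using len unfolding d_def by blast
qed

lemma interp_prefix_not_less:
  assumes un: "uniform k \<phi>" and k: "2 \<le> k" and ne: "\<not> exceptional k \<phi>"
    and v: "v \<in> factors \<phi> [A]" "morph \<phi> v = p @ u @ s"
    and v': "v' \<in> factors \<phi> [A]" "morph \<phi> v' = p' @ u @ s'"
    and short: "length p' < k" and long: "k * (2 * run_bound k + 2) \<le> length u"
  shows "\<not> length p < length p'"
proof
  assume lt: "length p < length p'"
  define R where "R = run_bound k"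
  have inj: "\<phi> A \<noteq> \<phi> B" using ne unfolding exceptional_def by blast
  obtain w where w: "w \<in> factors \<phi> [A]" "length w = 2 * R + 1"
      "\<forall>j. Suc j < length w \<longrightarrow> shift_edge \<phi> (length p' - length p) (w ! j) (w ! Suc j)"
    using interps_shift_walk[OF un _ v v' lt short, of "2 * R"] k long unfolding R_def by auto
  have "0 < length p' - length p" "length p' - length p < k" using lt short by auto
  then obtain x y n c where z: "length w \<le> 2 * n" "w = x @ replicate n c @ y \<or> w = x @ alt_word c n @ y"
    using walk_contains_long_run[OF w(3) shift_edges_incomplete[OF un inj]] by blast
  have "R < n" using w(2) z(1) by simp
  have "k * (3 * k + 2) \<le> k * (k * (3 * k + 2))" using k by simp
  then have "k * (3 * k + 2) \<le> R" unfolding R_def run_bound_def by simp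
  from z(2) show False
  proof
    assume "w = x @ replicate n c @ y"
    with w(1) have "replicate n c \<in> factors \<phi> [A]" by (blast intro: factors_infix)
    then show False using replicate_factor_short[OF un k ne] \<open>R < n\<close> \<open>k * (3 * k + 2) \<le> R\<close> by fastforce
  next
    assume "w = x @ alt_word c n @ y"
    with w(1) have "alt_word c n \<in> factors \<phi> [A]" by (blast intro: factors_infix)
    then show False using alt_word_factor_short[OF un k ne] \<open>R < n\<close> unfolding R_def by fastforce
  qed
qed

lemma interp_offsets_agree:
  assumes un: "uniform k \<phi>" and k: "2 \<le> k" and ne: "\<not> exceptional k \<phi>"
    and i: "is_interp \<phi> [A] u (p, v, s)" "is_interp \<phi> [A] u (p', v', s')"
    and long: "k * (2 * run_bound k + 2) \<le> length u"
  shows "length p mod k = length p' mod k"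
proof -
  have "v \<in> factors \<phi> [A]" "morph \<phi> v = p @ u @ s"
    and "v' \<in> factors \<phi> [A]" "morph \<phi> v' = p' @ u @ s'"
    using i by (simp_all add: is_interp_def)
  then obtain q x q' x' where x: "x \<in> factors \<phi> [A]" "morph \<phi> x = q @ u @ s" "length q = length p mod k"
    and x': "x' \<in> factors \<phi> [A]" "morph \<phi> x' = q' @ u @ s'" "length q' = length p' mod k"
    using interp_reduce_prefix[OF un] by metis
  have "length q < k" "length q' < k" using x(3) x'(3) k by simp_all
  then have "\<not> length q < length q'" "\<not> length q' < length q"
    using interp_prefix_not_less[OF un k ne x(1,2) x'(1,2)]
      interp_prefix_not_less[OF un k ne x'(1,2) x(1,2)] long by auto
  then show ?thesis using x(3) x'(3) by simp
qed

text \<open>With a uniform morphism, an interpretation is synchronized at \<open>j\<close> exactly when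
  \<open>|p| + j\<close> is a multiple of \<open>k\<close>.\<close>

lemma has_sync_pointI:
  assumes un: "uniform k \<phi>" and k: "0 < k" and long: "k \<le> length u"
    and agree: "\<And>p v s p' v' s'. is_interp \<phi> w u (p, v, s) \<Longrightarrow> is_interp \<phi> w u (p', v', s')
                  \<Longrightarrow> length p mod k = length p' mod k"
  shows "has_sync_point \<phi> w u"
proof (cases "\<exists>t. is_interp \<phi> w u t")
  case False
  then show ?thesis unfolding has_sync_point_def by auto
next
  case True
  then obtain t0 where "is_interp \<phi> w u t0" by blast
  then obtain p0 v0 s0 where i0: "is_interp \<phi> w u (p0, v0, s0)" by (cases t0) auto
  define j where "j = k - length p0 mod k"
  have j: "j \<le> length u" using long unfolding j_def by simp
  have cut: "\<exists>i. morph \<phi> (take i v) = p @ take j u" if i: "is_interp \<phi> w u (p, v, s)" for p v s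
  proof -
    define i where "i = length p div k + 1"
    have "k * (length p div k) + length p mod k = length p" by (rule mult_div_mod_eq)
    moreover have "length p mod k < k" using k by simp
    moreover have "k * i = k * (length p div k) + k" unfolding i_def by simp
    ultimately have i_eq: "k * i - length p = j" "length p \<le> k * i"
      using agree[OF i i0] unfolding j_def by linarith+
    have "morph \<phi> (take i v) = take (k * i) (p @ u @ s)"
      using take_morph[OF un] i by (simp add: is_interp_def)
    also have "\<dots> = p @ take j u" using i_eq j by (simp add: take_append)
    finally show ?thesis by blast
  qed
  show ?thesis unfolding has_sync_point_def
  proof (intro exI[of _ j] conjI allI impI)
    fix t t' assume "is_interp \<phi> w u t" "is_interp \<phi> w u t'"
    then show "synchronized_at \<phi> u j t t'"
      using cut unfolding synchronized_at_def by (cases t; cases t') auto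
  qed (rule j)
qed

lemma circular_if_not_exceptional:
  assumes un: "uniform k \<phi>" and k: "2 \<le> k" and ne: "\<not> exceptional k \<phi>"
  shows "circular \<phi> [A]"
proof -
  have inj: "\<phi> A \<noteq> \<phi> B" using ne unfolding exceptional_def by blast
  have "\<phi> c \<noteq> []" for c using uniform_length[OF un, of c] k by auto
  moreover have "u = v" if "morph \<phi> u = morph \<phi> v" for u v
    using inj_morph[OF un _ inj that] k by simp
  moreover have "has_sync_point \<phi> [A] u" if long: "k * (2 * run_bound k + 2) < length u" for u
  proof (rule has_sync_pointI[OF un])
    have "k * 1 \<le> k * (2 * run_bound k + 2)" by (intro mult_le_mono2) simp
    then show "k \<le> length u" using long by simp
    show "length p mod k = length p' mod k"
      if "is_interp \<phi> [A] u (p, v, s)" "is_interp \<phi> [A] u (p', v', s')" for p v s p' v' s'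
      using interp_offsets_agree[OF un k ne that] long by simp
  qed (use k in simp)
  ultimately show ?thesis unfolding circular_def by blast
qed

theorem mainTheorem4:
  fixes k :: nat and \<phi> :: "ab \<Rightarrow> ab list"
  assumes "k \<ge> 2" and "uniform k \<phi>"
  shows "\<not> circular \<phi> [A] \<longleftrightarrow>
    (\<phi> A = \<phi> B
     \<or> (\<phi> A = replicate k A \<or> \<phi> B = replicate k B)
     \<or> (\<phi> A = replicate k B \<and> \<phi> B = replicate k A)
     \<or> (\<exists>m\<ge>1. k = 2*m+1 \<and> \<phi> A = concat (replicate m [A,B]) @ [A]
                          \<and> \<phi> B = concat (replicate m [B,A]) @ [B])
     \<or> (\<exists>m\<ge>1. k = 2*m+1 \<and> \<phi> A = concat (replicate m [B,A]) @ [B]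
                          \<and> \<phi> B = concat (replicate m [A,B]) @ [A]))"
proof -
  have "\<not> circular \<phi> [A] \<longleftrightarrow> exceptional k \<phi>"
    using not_circular_if_exceptional[OF assms(2,1)] circular_if_not_exceptional[OF assms(2,1)]
    by blast
  then show ?thesis unfolding exceptional_def .
qed

end
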